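(* Let $n\ge1$, $k\ge1$ be integers and $p$ a prime with $p\nmid n$. Then $$\Phi^*_{p^kn}(x)=\frac{\Phi^*_n(x^{p^k})}{\Phi^*_n(x)}.$$
   Context: $d\mid\mid n$ means $d\mid n$ and $\gcd(d,n/d)=1$; $(j,n)_*=\max\{d: d\mid j,\ d\mid\mid n\}$; $\Phi^*_n(x)=\prod_{1\le j\le n,\ (j,n)_*=1}(x-e^{2\pi i j/n})$. *)

theory Defs
  imports "HOL-Analysis.Analysis" "HOL-Computational_Algebra.Polynomial"
begin

definition unitary_dvd :: "nat \<Rightarrow> nat \<Rightarrow> bool" where
  "unitary_dvd d n \<longleftrightarrow> d dvd n \<and> coprime d (n div d)"

definition bi_unitary_gcd :: "nat \<Rightarrow> nat \<Rightarrow> nat" where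
  "bi_unitary_gcd j n = Max {d. d dvd j \<and> unitary_dvd d n}"

definition unitary_cyclotomic :: "nat \<Rightarrow> complex poly" where
  "unitary_cyclotomic n =
     (\<Prod>j\<in>{j. 1 \<le> j \<and> j \<le> n \<and> bi_unitary_gcd j n = 1}.
        [:- cis (2 * pi * real j / real n), 1:])"

end

theory Submission
  imports Defs
begin

text \<open>
  Let \<open>N = p^k n\<close> and \<open>\<zeta>\<^sub>m = e^{2\<pi>i/m}\<close>. Indexing the roots by residues,
  \<open>\<Phi>*\<^sub>m(x)\<close> is the product of \<open>x - \<zeta>\<^sub>m^j\<close> over \<open>j < m\<close> with \<open>(j,m)\<^sub>* = 1\<close>.
  Since \<open>x^{p^k} - \<zeta>\<^sub>n^j\<close> is the product of \<open>x - \<zeta>\<^sub>N^{j+sn}\<close> over \<open>s < p^k\<close>, and the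
  condition \<open>(t,n)\<^sub>* = 1\<close> only depends on \<open>t mod n\<close>, \<open>\<Phi>*\<^sub>n(x^{p^k})\<close> is the product of
  \<open>x - \<zeta>\<^sub>N^t\<close> over all \<open>t < N\<close> with \<open>(t,n)\<^sub>* = 1\<close>. The unitary divisors of \<open>N\<close> are
  the \<open>d\<close> and \<open>p^k d\<close> with \<open>d || n\<close>, so among these \<open>t\<close> the ones with \<open>(t,N)\<^sub>* = 1\<close>
  are exactly those with \<open>p^k \<nmid> t\<close>; they give \<open>\<Phi>*\<^sub>N\<close>. The remaining \<open>t = p^k j\<close> give
  back the roots \<open>\<zeta>\<^sub>n^j\<close> of \<open>\<Phi>*\<^sub>n\<close>.
\<close>

definition bi_unitary_coprime :: "nat \<Rightarrow> nat \<Rightarrow> bool" where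
  "bi_unitary_coprime j n \<longleftrightarrow> (\<forall>d. d dvd j \<and> unitary_dvd d n \<longrightarrow> d = 1)"

lemma bi_unitary_gcd_eq_1_iff:
  assumes "n > 0"
  shows "bi_unitary_gcd j n = 1 \<longleftrightarrow> bi_unitary_coprime j n"
proof -
  define D where "D = {d. d dvd j \<and> unitary_dvd d n}"
  have "D \<subseteq> {..n}"
    using assms by (auto simp: D_def unitary_dvd_def intro: dvd_imp_le)
  then have "finite D"
    by (rule finite_subset) simp
  have "1 \<in> D" and "0 \<notin> D"
    using assms by (simp_all add: D_def unitary_dvd_def)
  have "Max D = 1 \<longleftrightarrow> Max D \<le> 1"
    using Max_ge[OF \<open>finite D\<close> \<open>1 \<in> D\<close>] by linarith
  also have "\<dots> \<longleftrightarrow> (\<forall>d\<in>D. d \<le> 1)"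
    using \<open>finite D\<close> \<open>1 \<in> D\<close> by (subst Max_le_iff) auto
  also have "\<dots> \<longleftrightarrow> (\<forall>d\<in>D. d = 1)"
    using \<open>0 \<notin> D\<close> by (metis le_antisym less_one not_less)
  finally show ?thesis
    by (simp add: bi_unitary_gcd_def bi_unitary_coprime_def D_def)
qed

lemma bi_unitary_coprime_mod: "bi_unitary_coprime (j mod n) n \<longleftrightarrow> bi_unitary_coprime j n"
  unfolding bi_unitary_coprime_def unitary_dvd_def by (metis dvd_mod_iff)

lemma bi_unitary_coprime_mult_left:
  assumes "coprime q n"
  shows "bi_unitary_coprime (q * j) n \<longleftrightarrow> bi_unitary_coprime j n"
proof -
  have "d dvd q * j \<longleftrightarrow> d dvd j" if "d dvd n" for d
    using assms that by (metis coprime_commute coprime_dvd_mult_right_iff coprime_imp_coprime dvd_trans)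
  then show ?thesis
    unfolding bi_unitary_coprime_def unitary_dvd_def by blast
qed

lemma unitary_dvd_mult_left_iff:
  fixes a b d :: nat
  assumes "coprime a d"
  shows "unitary_dvd d (a * b) \<longleftrightarrow> unitary_dvd d b"
proof (cases "d dvd b")
  case True
  then have "a * b div d = a * (b div d)"
    by (simp add: div_mult_swap)
  with assms show ?thesis
    by (simp add: unitary_dvd_def True coprime_commute)
next
  case False
  with assms show ?thesis
    by (simp add: unitary_dvd_def coprime_commute coprime_dvd_mult_right_iff)
qed

lemma prime_power_dvd_unitary_divisor:
  fixes p d n :: nat
  assumes "unitary_dvd d (p ^ k * n)" and "prime p" and "p dvd d"
  shows "p ^ k dvd d"
proof -
  obtain e where e: "p ^ k * n = d * e" and "coprime d e"
    using assms(1) unfolding unitary_dvd_def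
    by (metis dvd_div_mult_self mult.commute)
  then have "coprime (p ^ k) e"
    using assms(3) by (auto intro: coprime_imp_coprime dvd_trans)
  moreover have "p ^ k dvd d * e"
    by (simp flip: e)
  ultimately show ?thesis
    by (simp add: coprime_dvd_mult_left_iff)
qed

lemma bi_unitary_coprime_prime_power_mult_iff:
  fixes p n t :: nat
  assumes "prime p" and "\<not> p dvd n" and "k \<ge> 1"
  shows "bi_unitary_coprime t (p ^ k * n) \<longleftrightarrow> \<not> p ^ k dvd t \<and> bi_unitary_coprime t n"
proof
  assume coprime_t: "bi_unitary_coprime t (p ^ k * n)"
  have "coprime (p ^ k) n"
    using assms(1,2) by (simp add: prime_imp_coprime)
  then have "unitary_dvd (p ^ k) (p ^ k * n)"
    using assms(1) by (simp add: unitary_dvd_def prime_gt_0_nat)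
  moreover have "p ^ k \<noteq> 1"
    using assms(3) prime_gt_1_nat[OF assms(1)] by simp
  ultimately have "\<not> p ^ k dvd t"
    using coprime_t by (auto simp: bi_unitary_coprime_def)
  moreover have "bi_unitary_coprime t n"
    unfolding bi_unitary_coprime_def
  proof (intro allI impI)
    fix d
    assume d: "d dvd t \<and> unitary_dvd d n"
    then have "\<not> p dvd d"
      using assms(2) by (auto simp: unitary_dvd_def intro: dvd_trans)
    then have "coprime (p ^ k) d"
      using assms(1) by (simp add: prime_imp_coprime)
    with d show "d = 1"
      using coprime_t by (simp add: bi_unitary_coprime_def unitary_dvd_mult_left_iff)
  qed
  ultimately show "\<not> p ^ k dvd t \<and> bi_unitary_coprime t n" ..
next
  assume t: "\<not> p ^ k dvd t \<and> bi_unitary_coprime t n"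
  show "bi_unitary_coprime t (p ^ k * n)"
    unfolding bi_unitary_coprime_def
  proof (intro allI impI)
    fix d
    assume d: "d dvd t \<and> unitary_dvd d (p ^ k * n)"
    then have "\<not> p dvd d"
      using t assms(1) prime_power_dvd_unitary_divisor by (meson dvd_trans)
    then have "coprime (p ^ k) d"
      using assms(1) by (simp add: prime_imp_coprime)
    with d t show "d = 1"
      by (simp add: bi_unitary_coprime_def unitary_dvd_mult_left_iff)
  qed
qed

definition root_unity_factor :: "nat \<Rightarrow> nat \<Rightarrow> complex poly" where
  "root_unity_factor m j = [:- cis (2 * pi * real j / real m), 1:]"

lemma unitary_cyclotomic_altdef:
  assumes "m > 0"
  shows "unitary_cyclotomic m =
           (\<Prod>j\<in>{j. j < m \<and> bi_unitary_coprime j m}. root_unity_factor m j)"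
  unfolding unitary_cyclotomic_def
proof (rule prod.reindex_bij_witness[where j = "\<lambda>j. j mod m" and i = "\<lambda>j. if j = 0 then m else j"])
  fix j
  assume j: "j \<in> {j. 1 \<le> j \<and> j \<le> m \<and> bi_unitary_gcd j m = 1}"
  then show "(if j mod m = 0 then m else j mod m) = j"
    by (cases "j = m") auto
  have "bi_unitary_coprime j m"
    using j bi_unitary_gcd_eq_1_iff[OF assms] by blast
  with j show "j mod m \<in> {j. j < m \<and> bi_unitary_coprime j m}"
    using assms by (simp add: bi_unitary_coprime_mod)
  have "root_unity_factor m m = root_unity_factor m 0"
    using assms by (simp add: root_unity_factor_def)
  with j show "root_unity_factor m (j mod m) = [:- cis (2 * pi * real j / real m), 1:]"
    by (cases "j = m") (simp_all add: root_unity_factor_def)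
next
  fix j
  assume j: "j \<in> {j. j < m \<and> bi_unitary_coprime j m}"
  then show "(if j = 0 then m else j) mod m = j"
    by simp
  have "bi_unitary_coprime m m \<longleftrightarrow> bi_unitary_coprime 0 m"
    using bi_unitary_coprime_mod[of m m] by simp
  with j have "bi_unitary_coprime (if j = 0 then m else j) m"
    by auto
  then have "bi_unitary_gcd (if j = 0 then m else j) m = 1"
    using bi_unitary_gcd_eq_1_iff[OF assms] by blast
  with j assms show "(if j = 0 then m else j) \<in> {j. 1 \<le> j \<and> j \<le> m \<and> bi_unitary_gcd j m = 1}"
    by auto
qed

lemma unitary_cyclotomic_nonzero:
  assumes "m > 0"
  shows "unitary_cyclotomic m \<noteq> 0"
  using assms by (simp add: unitary_cyclotomic_altdef root_unity_factor_def)

lemma monom_minus_power_eq_prod: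
  fixes a :: complex
  assumes "q > 0" and "a \<noteq> 0"
  shows "monom 1 q - [:a ^ q:] = (\<Prod>s<q. [:- (a * cis (2 * pi * real s / real q)), 1:])"
proof -
  let ?\<omega> = "\<lambda>s::nat. cis (2 * pi * real s / real q)"
  let ?P = "\<Prod>s<q. [:- (a * ?\<omega> s), 1:]"
  have roots_unity: "bij_betw ?\<omega> {..<q} {z. z ^ q = 1}"
    by (rule Complex.bij_betw_roots_unity[OF assms(1)])
  then have "inj_on (\<lambda>s. a * ?\<omega> s) {..<q}"
    using assms(2) by (auto simp: inj_on_def bij_betw_def)
  then have card_roots: "card ((\<lambda>s. a * ?\<omega> s) ` {..<q}) = q"
    by (simp add: card_image)
  have "degree ?P = q"
    by (subst degree_prod_eq_sum_degree) auto
  moreover have "lead_coeff ?P = 1"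
    by (simp add: lead_coeff_prod)
  moreover have "degree (monom 1 q - [:a ^ q:]) \<le> q"
    by (rule order.trans[OF degree_diff_le_max]) (simp add: degree_monom_le)
  moreover have "coeff (monom 1 q - [:a ^ q:]) q = 1"
    using assms(1) by (simp add: coeff_pCons split: nat.split)
  moreover have "poly (monom 1 q - [:a ^ q:]) z = poly ?P z"
    if z_root: "z \<in> (\<lambda>s. a * ?\<omega> s) ` {..<q}" for z
  proof -
    obtain s where "s < q" and z: "z = a * ?\<omega> s"
      using z_root by blast
    have "?\<omega> s ^ q = 1"
      using \<open>s < q\<close> roots_unity by (auto simp: bij_betw_def)
    then have "poly (monom 1 q - [:a ^ q:]) z = 0"
      using z by (simp add: poly_monom power_mult_distrib)
    moreover have "poly ?P z = 0"
      using \<open>s < q\<close> z by (auto simp: poly_prod)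
    ultimately show ?thesis
      by simp
  qed
  ultimately show ?thesis
    using card_roots by (intro poly_eqI_degree_lead_coeff[of _ _ _ "(\<lambda>s. a * ?\<omega> s) ` {..<q}"]) auto
qed

lemma pcompose_root_unity_factor_monom:
  assumes "q > 0" and "n > 0"
  shows "pcompose (root_unity_factor n j) (monom 1 q) =
           (\<Prod>s<q. root_unity_factor (q * n) (j + s * n))"
proof -
  define a where "a = cis (2 * pi * real j / real (q * n))"
  have "real q * (2 * pi * real j / real (q * n)) = 2 * pi * real j / real n"
    using assms by (simp add: field_simps)
  then have "a ^ q = cis (2 * pi * real j / real n)"
    by (simp only: a_def Complex.DeMoivre)
  then have "pcompose (root_unity_factor n j) (monom 1 q) = monom 1 q - [:a ^ q:]"
    by (simp add: root_unity_factor_def pcompose_pCons)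
  also have "\<dots> = (\<Prod>s<q. [:- (a * cis (2 * pi * real s / real q)), 1:])"
    using assms(1) by (rule monom_minus_power_eq_prod) (simp add: a_def)
  also have "\<dots> = (\<Prod>s<q. root_unity_factor (q * n) (j + s * n))"
    using assms by (simp add: a_def cis_mult root_unity_factor_def field_simps)
  finally show ?thesis .
qed

lemma prod_lessThan_mult_by_residue:
  fixes f :: "nat \<Rightarrow> 'a :: comm_monoid_mult"
  assumes "n > 0"
  shows "(\<Prod>t\<in>{t. t < q * n \<and> P (t mod n)}. f t) =
           (\<Prod>j\<in>{j. j < n \<and> P j}. \<Prod>s<q. f (j + s * n))"
proof -
  have "(\<Prod>j\<in>{j. j < n \<and> P j}. \<Prod>s<q. f (j + s * n)) =
          (\<Prod>(j, s)\<in>{j. j < n \<and> P j} \<times> {..<q}. f (j + s * n))"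
    by (simp add: prod.cartesian_product)
  also have "\<dots> = (\<Prod>t\<in>{t. t < q * n \<and> P (t mod n)}. f t)"
  proof (rule prod.reindex_bij_witness[where i = "\<lambda>t. (t mod n, t div n)" and j = "\<lambda>(j, s). j + s * n"])
    fix t
    assume "t \<in> {t. t < q * n \<and> P (t mod n)}"
    then show "(t mod n, t div n) \<in> {j. j < n \<and> P j} \<times> {..<q}"
      using assms by (auto simp: less_mult_imp_div_less)
  next
    fix x
    assume "x \<in> {j. j < n \<and> P j} \<times> {..<q}"
    moreover have "j + s * n < q * n" if "j < n" and "s < q" for j s
    proof -
      have "j + s * n < (s + 1) * n"
        using \<open>j < n\<close> by simp
      also have "\<dots> \<le> q * n"
        using \<open>s < q\<close> by (intro mult_le_mono1) simp
      finally show ?thesis .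
    qed
    ultimately show "(case x of (j, s) \<Rightarrow> j + s * n) \<in> {t. t < q * n \<and> P (t mod n)}"
      by auto
  qed (auto simp: mod_mult_div_eq)
  finally show ?thesis ..
qed

lemma pcompose_unitary_cyclotomic_monom:
  assumes "q > 0" and "n > 0"
  shows "pcompose (unitary_cyclotomic n) (monom 1 q) =
           (\<Prod>t\<in>{t. t < q * n \<and> bi_unitary_coprime t n}. root_unity_factor (q * n) t)"
proof -
  have "pcompose (unitary_cyclotomic n) (monom 1 q) =
          (\<Prod>j\<in>{j. j < n \<and> bi_unitary_coprime j n}. \<Prod>s<q. root_unity_factor (q * n) (j + s * n))"
    using assms
    by (simp add: unitary_cyclotomic_altdef pcompose_prod pcompose_root_unity_factor_monom)
  also have "\<dots> = (\<Prod>t\<in>{t. t < q * n \<and> bi_unitary_coprime (t mod n) n}. root_unity_factor (q * n) t)"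
    using assms(2) by (rule prod_lessThan_mult_by_residue[symmetric])
  finally show ?thesis
    by (simp add: bi_unitary_coprime_mod)
qed

lemma prod_multiples_root_unity_factor:
  assumes "q > 0" and "n > 0" and "coprime q n"
  shows "(\<Prod>t\<in>{t. t < q * n \<and> q dvd t \<and> bi_unitary_coprime t n}. root_unity_factor (q * n) t) =
           unitary_cyclotomic n"
proof -
  have "{t. t < q * n \<and> q dvd t \<and> bi_unitary_coprime t n} =
          (\<lambda>j. q * j) ` {j. j < n \<and> bi_unitary_coprime j n}"
    using assms(1) bi_unitary_coprime_mult_left[OF assms(3)] by (auto elim!: dvdE)
  moreover have "inj_on (\<lambda>j. q * j) A" for A
    using assms(1) by (simp add: inj_on_def)
  moreover have "root_unity_factor (q * n) (q * j) = root_unity_factor n j" for j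
    using assms(1) by (simp add: root_unity_factor_def mult.assoc)
  ultimately show ?thesis
    using assms(2) by (simp add: prod.reindex unitary_cyclotomic_altdef)
qed

theorem mainTheorem8:
  fixes n k p :: nat
  assumes "n \<ge> 1" and "k \<ge> 1" and "prime p" and "\<not> p dvd n"
  shows "unitary_cyclotomic (p ^ k * n) =
           pcompose (unitary_cyclotomic n) (monom 1 (p ^ k)) div unitary_cyclotomic n"
proof -
  define q where "q = p ^ k"
  have "q > 0" and "n > 0" and "coprime q n"
    using assms by (simp_all add: q_def prime_gt_0_nat prime_imp_coprime)
  let ?f = "root_unity_factor (q * n)"
  have residues_split: "{t. t < q * n \<and> bi_unitary_coprime t n} =
                 {t. t < q * n \<and> \<not> q dvd t \<and> bi_unitary_coprime t n} \<union>
                 {t. t < q * n \<and> q dvd t \<and> bi_unitary_coprime t n}"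
    by auto
  have "pcompose (unitary_cyclotomic n) (monom 1 q) =
          (\<Prod>t\<in>{t. t < q * n \<and> bi_unitary_coprime t n}. ?f t)"
    using \<open>q > 0\<close> \<open>n > 0\<close> by (rule pcompose_unitary_cyclotomic_monom)
  also have "\<dots> = (\<Prod>t\<in>{t. t < q * n \<and> \<not> q dvd t \<and> bi_unitary_coprime t n}. ?f t) *
                   (\<Prod>t\<in>{t. t < q * n \<and> q dvd t \<and> bi_unitary_coprime t n}. ?f t)"
    unfolding residues_split by (rule prod.union_disjoint) auto
  also have "\<dots> = unitary_cyclotomic (q * n) * unitary_cyclotomic n"
    using assms \<open>q > 0\<close> \<open>n > 0\<close> \<open>coprime q n\<close>
    by (simp add: unitary_cyclotomic_altdef prod_multiples_root_unity_factor
                  q_def bi_unitary_coprime_prime_power_mult_iff)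
  finally show ?thesis
    using unitary_cyclotomic_nonzero[OF \<open>n > 0\<close>] by (simp add: q_def)
qed

end
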